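(* In the setting and notation described in the context (GKSM iteration), assume in addition that the stepsizes satisfy $0<\alpha_{\min}\le\alpha_k\le\alpha_{\max}<\frac{2\underline{\eta}}{\underline{\eta}+L}$ for all $k$, and put $\upsilon:=\frac{\underline{\eta}}{\alpha_{\max}}-\frac{\underline{\eta}+L}{2}>0$ and $\Delta_k:=\min_{1\le k'\le k}\|\mathbf{x}_{k'+1}-\mathbf{x}_{k'}\|_2^2$. Then, for any $K\in\{1,2,\dots\}\cup\{+\infty\}$ and all $k\ge1$: (i) $F(\mathbf{x}_{k+1})\le F(\mathbf{x}_k)$; (ii) $\Delta_k\le \dfrac{F(\mathbf{x}_1)-F^*}{\upsilon\,k}$, where $F^*=\inf_{\mathbf{x}\in\mathcal C}F(\mathbf{x})$; (iii) $\|\mathbf{x}_{k+1}-\mathbf{x}_k\|\to0$ as $k\to\infty$.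
   Context: Setting. Identify $\mathbb C^N$ with $\mathbb R^{2N}$ equipped with the real inner product $\mathrm{Re}\langle\mathbf u,\mathbf v\rangle$, where $\langle\mathbf u,\mathbf v\rangle=\mathbf u^{H}\mathbf v$ ($^H$ = conjugate transpose); all gradients are taken with respect to this inner product. Let $\mathbf A\in\mathbb C^{m\times N}$, $\mathbf y\in\mathbb C^m$ with $\mathbf A^H\mathbf y\neq\mathbf 0$, and $h(\mathbf x)=\frac12\|\mathbf A\mathbf x-\mathbf y\|_2^2$ (so $\nabla h(\mathbf x)=\mathbf A^H(\mathbf A\mathbf x-\mathbf y)$). Let $f:\mathbb C^N\to\mathbb R$ be differentiable and bounded below, with $\nabla f$ $L$-Lipschitz ($L>0$): $\|\nabla f(\mathbf x_1)-\nabla f(\mathbf x_2)\|\le L\|\mathbf x_1-\mathbf x_2\|$. Let $\mathcal C\subseteq\mathbb C^N$ be nonempty, closed and convex, $\iota_{\mathcal C}$ its indicator function ($0$ on $\mathcal C$, $+\infty$ outside), $F=h+f$, $F_{\mathcal C}=F+\iota_{\mathcal C}$, and $\|\mathbf x\|_{\mathbf M}^2=\mathbf x^H\mathbf M\mathbf x$. GKSM iteration. Fix $K\in\{1,2,\dots\}\cup\{+\infty\}$, stepsizes $\alpha_k>0$, and Hermitian matrices $\mathbf B_k\in\mathbb C^{N\times N}$ with $\underline{\eta}\,\mathbf I\preceq\mathbf B_k\preceq\overline{\eta}\,\mathbf I$ for all $k$, where $0<\underline{\eta}\le\overline{\eta}<\infty$ (in the paper $\mathbf B_k$ is produced by a modified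 self-scaling Hermitian rank-one quasi-Newton rule whose output satisfies these bounds). Let $\mathbf V_1=\mathbf A^H\mathbf y/\|\mathbf A^H\mathbf y\|$ and choose $\mathbf x_1\in\mathcal C\cap\operatorname{range}(\mathbf V_1)$. For $k=1,2,\dots$: define $\bar F_k(\mathbf x)=h(\mathbf x)+\mathrm{Re}\langle\nabla f(\mathbf x_k),\mathbf x\rangle+\frac{1}{2\alpha_k}\|\mathbf x-\mathbf x_k\|_{\mathbf B_k}^2$; let $\boldsymbol\beta_k$ be the (unique) minimizer of $\boldsymbol\beta\mapsto\bar F_k(\mathbf V_k\boldsymbol\beta)$ over $\{\boldsymbol\beta:\mathbf V_k\boldsymbol\beta\in\mathcal C\}$, and set $\mathbf x_{k+1}=\mathbf V_k\boldsymbol\beta_k$. Then, if $k\le K$: compute $\mathbf r_k=\nabla\bar F_k(\mathbf x_{k+1})=\mathbf A^H(\mathbf A\mathbf x_{k+1}-\mathbf y)+\nabla f(\mathbf x_k)+\alpha_k^{-1}\mathbf B_k(\mathbf x_{k+1}-\mathbf x_k)$ and $\tilde{\mathbf r}_k=(\mathbf I-\mathbf V_k\mathbf V_k^H)\mathbf r_k$; if $\tilde{\mathbf r}_k\ne\mathbf 0$ set $\mathbf V_{k+1}=[\mathbf V_k,\ \tilde{\mathbf r}_k/\|\tilde{\mathbf r}_k\|]$, otherwise $\mathbf V_{k+1}=\mathbf V_k$. If $k>K$: set $\mathbf V_{k+1}=\mathbf I_N$. (Thus every $\mathbf V_k$ has orthonormal columns, $\mathbf V_k^H\mathbf V_k=\mathbf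 I$.) *)

theory Defs
  imports "HOL-Analysis.Analysis" "HOL-Library.Extended_Nat"
begin

text \<open>The HOL-Analysis real inner product on complex ^ 'n is exactly Re(u^H v), and the norm
  is the Euclidean 2-norm.\<close>

definition cinner :: "complex ^ 'n \<Rightarrow> complex ^ 'n \<Rightarrow> complex" where
  "cinner u v = (\<Sum>i\<in>UNIV. cnj (u $ i) * v $ i)"

definition cadj :: "complex ^ 'n ^ 'm \<Rightarrow> complex ^ 'm ^ 'n" where
  "cadj M = (\<chi> i j. cnj (M $ j $ i))"

definition cscale :: "complex \<Rightarrow> complex ^ 'n \<Rightarrow> complex ^ 'n" where
  "cscale c v = (\<chi> i. c * v $ i)"

text \<open>A matrix with orthonormal columns is represented by the list of its columns;
  V \<beta> is the linear combination of the columns with coefficients \<beta>.\<close>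
definition colsmul :: "(complex ^ 'n) list \<Rightarrow> (nat \<Rightarrow> complex) \<Rightarrow> complex ^ 'n" where
  "colsmul Vs \<beta> = (\<Sum>j<length Vs. cscale (\<beta> j) (Vs ! j))"

definition projout :: "(complex ^ 'n) list \<Rightarrow> complex ^ 'n \<Rightarrow> complex ^ 'n" where
  "projout Vs r = r - (\<Sum>j<length Vs. cscale (cinner (Vs ! j) r) (Vs ! j))"

definition id_cols :: "(complex ^ ('n::finite)) list" where
  "id_cols = map (\<lambda>j. axis j 1) (SOME l. distinct l \<and> set l = (UNIV :: 'n set))"

definition hermitian :: "complex ^ 'n ^ 'n \<Rightarrow> bool" where
  "hermitian M \<longleftrightarrow> cadj M = M"

definition hfun :: "complex ^ 'n ^ 'm \<Rightarrow> complex ^ 'm \<Rightarrow> complex ^ 'n \<Rightarrow> real" where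
  "hfun A y x = (1/2) * (norm (A *v x - y))\<^sup>2"

definition Fbar :: "complex ^ 'n ^ 'm \<Rightarrow> complex ^ 'm \<Rightarrow> (complex ^ 'n \<Rightarrow> complex ^ 'n)
    \<Rightarrow> real \<Rightarrow> complex ^ 'n ^ 'n \<Rightarrow> complex ^ 'n \<Rightarrow> complex ^ 'n \<Rightarrow> real" where
  "Fbar A y gf a B xk x = hfun A y x + Re (cinner (gf xk) x)
      + (1 / (2 * a)) * Re (cinner (x - xk) (B *v (x - xk)))"

text \<open>The GKSM iteration: x, V are the iterate and basis sequences (indexed from 1).\<close>
definition gksm :: "complex ^ 'n ^ 'm \<Rightarrow> complex ^ 'm \<Rightarrow> (complex ^ 'n \<Rightarrow> complex ^ 'n)
    \<Rightarrow> (complex ^ 'n) set \<Rightarrow> enat \<Rightarrow> (nat \<Rightarrow> real) \<Rightarrow> (nat \<Rightarrow> complex ^ 'n ^ 'n)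
    \<Rightarrow> (nat \<Rightarrow> complex ^ ('n::finite)) \<Rightarrow> (nat \<Rightarrow> (complex ^ 'n) list) \<Rightarrow> bool" where
  "gksm A y gf C K \<alpha> B x V \<longleftrightarrow>
     V 1 = [scaleR (inverse (norm (cadj A *v y))) (cadj A *v y)]
   \<and> x 1 \<in> C \<and> (\<exists>\<beta>. x 1 = colsmul (V 1) \<beta>)
   \<and> (\<forall>k\<ge>1.
        (\<exists>\<beta>. x (k+1) = colsmul (V k) \<beta>) \<and> x (k+1) \<in> C
      \<and> (\<forall>\<beta>. colsmul (V k) \<beta> \<in> C \<longrightarrow>
            Fbar A y gf (\<alpha> k) (B k) (x k) (x (k+1))
              \<le> Fbar A y gf (\<alpha> k) (B k) (x k) (colsmul (V k) \<beta>))
      \<and> (enat k \<le> K \<longrightarrow>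
           (let r = cadj A *v (A *v x (k+1) - y) + gf (x k)
                    + scaleR (inverse (\<alpha> k)) (B k *v (x (k+1) - x k));
                rt = projout (V k) r
            in V (k+1) = (if rt \<noteq> 0 then V k @ [scaleR (inverse (norm rt)) rt] else V k)))
      \<and> (\<not> enat k \<le> K \<longrightarrow> V (k+1) = id_cols))"

end

theory Submission
  imports Defs
begin

(* The column spaces of the V_k are nested, so x_k still lies in the subspace searched at step k,
   and by convexity of C the whole segment from x_{k+1} to x_k is admissible for the subproblem.
   The surrogate Fbar_k is quadratic, so comparing its values along this segment with its minimum
   at x_{k+1} gives Fbar_k(x_k) - Fbar_k(x_{k+1}) >= eta/(2 alpha_k) |x_{k+1} - x_k|^2.  Combined
   with the descent lemma for the L-smooth part f this is the sufficient decrease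
   F(x_{k+1}) + upsilon |x_{k+1} - x_k|^2 <= F(x_k), and telescoping gives all three claims. *)

lemma Re_cinner [simp]: "Re (cinner u v) = inner u v"
  by (simp add: cinner_def inner_vec_def inner_complex_def Re_sum)

lemma matrix_vector_mult_scaleR_right:
  fixes M :: "'a::real_algebra_1 ^ 'n ^ 'm"
  shows "M *v (c *\<^sub>R v) = c *\<^sub>R (M *v v)"
  by (simp add: vec_eq_iff matrix_vector_mult_def scaleR_sum_right)

lemma colsmul_convex_comb:
  "colsmul Vs (\<lambda>j. complex_of_real a * \<beta> j + complex_of_real b * \<gamma> j)
     = a *\<^sub>R colsmul Vs \<beta> + b *\<^sub>R colsmul Vs \<gamma>"
  unfolding colsmul_def cscale_def
  by (simp add: vec_eq_iff sum_distrib_left sum.distrib scaleR_sum_right)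
     (simp add: sum_component scaleR_conv_of_real sum_distrib_left sum.distrib algebra_simps)

lemma colsmul_append:
  "colsmul (Vs @ [w]) (\<lambda>j. if j < length Vs then \<beta> j else 0) = colsmul Vs \<beta>"
  by (simp add: colsmul_def cscale_def nth_append vec_eq_iff)

lemma colsmul_id_cols_surj: "\<exists>\<beta>. z = colsmul (id_cols :: (complex ^ 'n::finite) list) \<beta>"
proof -
  define l where "l = (SOME l. distinct l \<and> set l = (UNIV :: 'n set))"
  have "\<exists>l. distinct l \<and> set l = (UNIV :: 'n set)"
    using finite_distinct_list[of "UNIV :: 'n set"] by auto
  then have l: "distinct l" "set l = UNIV"
    unfolding l_def by (metis (mono_tags, lifting) someI_ex)+
  have "colsmul (id_cols :: (complex ^ 'n) list) (\<lambda>i. z $ (l ! i))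
      = sum_list (map (\<lambda>j. cscale (z $ j) (axis j 1)) l)"
    by (simp add: colsmul_def id_cols_def l_def sum_list_sum_nth atLeast0LessThan)
  also have "\<dots> = (\<Sum>j\<in>UNIV. cscale (z $ j) (axis j 1))"
    using l by (simp add: sum_list_distinct_conv_sum_set)
  also have "\<dots> = z"
    by (simp add: vec_eq_iff cscale_def axis_def sum_component if_distrib cong: if_cong)
  finally show ?thesis by metis
qed

lemma inner_convex_comb:
  fixes p q P Q :: "'a::real_inner"
  shows "inner ((1 - t) *\<^sub>R p + t *\<^sub>R q) ((1 - t) *\<^sub>R P + t *\<^sub>R Q)
     = (1 - t) * inner p P + t * inner q Q - t * (1 - t) * inner (p - q) (P - Q)"
  by (simp add: inner_add_left inner_add_right inner_diff_left inner_diff_right algebra_simps)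

lemma Fbar_convex_comb:
  "Fbar A y gf a B xk ((1 - t) *\<^sub>R u + t *\<^sub>R v)
    = (1 - t) * Fbar A y gf a B xk u + t * Fbar A y gf a B xk v
      - t * (1 - t) * ((1/2) * (norm (A *v (u - v)))\<^sup>2 + (1 / (2*a)) * inner (u - v) (B *v (u - v)))"
proof -
  have res: "A *v ((1 - t) *\<^sub>R u + t *\<^sub>R v) - y = (1 - t) *\<^sub>R (A *v u - y) + t *\<^sub>R (A *v v - y)"
    and step: "(1 - t) *\<^sub>R u + t *\<^sub>R v - xk = (1 - t) *\<^sub>R (u - xk) + t *\<^sub>R (v - xk)"
    and Bstep: "B *v ((1 - t) *\<^sub>R (u - xk) + t *\<^sub>R (v - xk))
                = (1 - t) *\<^sub>R (B *v (u - xk)) + t *\<^sub>R (B *v (v - xk))"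
    by (simp_all add: matrix_vector_right_distrib matrix_vector_mult_scaleR_right algebra_simps)
  have diffs: "A *v u - y - (A *v v - y) = A *v (u - v)" "u - xk - (v - xk) = u - v"
      "B *v (u - xk) - B *v (v - xk) = B *v (u - v)"
    by (simp_all add: matrix_vector_mult_diff_distrib)
  have lin: "inner (gf xk) ((1 - t) *\<^sub>R u + t *\<^sub>R v) = (1 - t) * inner (gf xk) u + t * inner (gf xk) v"
    by (simp add: inner_add_right)
  have regroup: "\<And>P Q R g1 g2 c S T W :: real.
      (1/2) * ((1-t)*P + t*Q - t*(1-t)*R) + ((1-t)*g1 + t*g2) + c * ((1-t)*S + t*T - t*(1-t)*W)
      = (1-t) * ((1/2)*P + g1 + c*S) + t * ((1/2)*Q + g2 + c*T) - t*(1-t) * ((1/2)*R + c*W)"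
    by (simp add: field_simps)
  show ?thesis
    unfolding Fbar_def hfun_def Re_cinner power2_norm_eq_inner res step Bstep
      inner_convex_comb lin diffs
    by (rule regroup)
qed

lemma quadratic_segment_minimum_gap:
  fixes G :: "'a::real_vector \<Rightarrow> real"
  assumes min: "\<And>t. 0 < t \<Longrightarrow> t \<le> 1 \<Longrightarrow> G u \<le> G ((1 - t) *\<^sub>R u + t *\<^sub>R v)"
    and quadratic: "\<And>t. G ((1 - t) *\<^sub>R u + t *\<^sub>R v) = (1 - t) * G u + t * G v - t * (1 - t) * Q"
  shows "Q \<le> G v - G u"
proof (rule ccontr)
  define D where "D = G v - G u"
  have bound: "(1 - t) * Q \<le> D" if "0 < t" "t \<le> 1" for t
  proof -
    have "t * ((1 - t) * Q) \<le> t * D"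
      using min[OF that] quadratic[of t] by (simp add: D_def algebra_simps)
    then show ?thesis using that by simp
  qed
  assume "\<not> Q \<le> G v - G u"
  then have "D < Q" by (simp add: D_def)
  moreover have "0 \<le> D" using bound[of 1] by simp
  \<comment> \<open>this t makes (1 - t) Q the midpoint of D and Q\<close>
  moreover define t where "t = (Q - D) / (2 * Q)"
  ultimately have "0 < t" "t \<le> 1" "(1 - t) * Q = (Q + D) / 2"
    by (auto simp: t_def field_simps)
  with bound[of t] \<open>D < Q\<close> show False by simp
qed

subsection \<open>The descent lemma\<close>

lemma Lipschitz_gradient_upper_bound:
  fixes f :: "'a::real_inner \<Rightarrow> real"
  assumes grad: "\<And>z. (f has_derivative (\<lambda>h. inner (gf z) h)) (at z)"
    and lip: "\<And>z1 z2. norm (gf z1 - gf z2) \<le> L * norm (z1 - z2)"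
  shows "f (x + d) \<le> f x + inner (gf x) d + L/2 * (norm d)\<^sup>2"
proof -
  define \<phi> where "\<phi> t = f (x + t *\<^sub>R d) - t * inner (gf x) d - L/2 * t\<^sup>2 * (norm d)\<^sup>2" for t
  define \<phi>' where "\<phi>' t = inner (gf (x + t *\<^sub>R d)) d - inner (gf x) d - L * t * (norm d)\<^sup>2" for t
  have "(\<phi> has_real_derivative \<phi>' t) (at t)" for t
  proof -
    have "((\<lambda>t. x + t *\<^sub>R d) has_derivative (\<lambda>h. h *\<^sub>R d)) (at t)"
      by (auto intro!: derivative_eq_intros)
    from has_derivative_compose[OF this grad]
    have "((\<lambda>t. f (x + t *\<^sub>R d)) has_real_derivative inner (gf (x + t *\<^sub>R d)) d) (at t)"
      unfolding has_field_derivative_def by (simp add: mult.commute[of _ "inner _ d"])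
    then show ?thesis unfolding \<phi>_def[abs_def] \<phi>'_def
      by (auto intro!: derivative_eq_intros simp: power2_eq_square algebra_simps)
  qed
  then obtain z where z: "0 < z" "z < 1" "\<phi> 1 - \<phi> 0 = \<phi>' z"
    using MVT2[of 0 1 \<phi> \<phi>'] by auto
  have "inner (gf (x + z *\<^sub>R d) - gf x) d \<le> norm (gf (x + z *\<^sub>R d) - gf x) * norm d"
    by (rule norm_cauchy_schwarz)
  also have "\<dots> \<le> L * norm (z *\<^sub>R d) * norm d"
    using lip[of "x + z *\<^sub>R d" x] by (simp add: mult_right_mono)
  also have "\<dots> = L * z * (norm d)\<^sup>2" using z by (simp add: power2_eq_square)
  finally have "\<phi>' z \<le> 0" unfolding \<phi>'_def by (simp add: inner_diff_left)
  with z have "\<phi> 1 \<le> \<phi> 0" by simp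
  then show ?thesis unfolding \<phi>_def by simp
qed

lemma gksm_iterate_mem:
  assumes "gksm A y gf C K \<alpha> B x V" "1 \<le> k"
  shows "x k \<in> C"
  using assms(2)
proof (induction k rule: nat_induct_at_least)
  case base then show ?case using assms(1) by (simp add: gksm_def)
next
  case (Suc k) then show ?case using assms(1) unfolding gksm_def by (metis Suc_eq_plus1)
qed

lemma gksm_basis_step:
  assumes "gksm A y gf C K \<alpha> B x V" "1 \<le> k"
  shows "(\<exists>w. V (k+1) = V k @ [w]) \<or> V (k+1) = V k \<or> V (k+1) = id_cols"
  using assms unfolding gksm_def Let_def by (cases "enat k \<le> K") (auto split: if_splits)

lemma gksm_iterate_in_span:
  assumes iter: "gksm A y gf C K \<alpha> B x V" and "1 \<le> k"
  shows "\<exists>\<beta>. x k = colsmul (V k) \<beta>"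
  using assms(2)
proof (induction k rule: nat_induct_at_least)
  case base then show ?case using iter unfolding gksm_def by blast
next
  case (Suc k)
  then obtain \<beta> where "x (k+1) = colsmul (V k) \<beta>"
    using iter unfolding gksm_def by blast
  then show ?case
    using gksm_basis_step[OF iter Suc(1)] colsmul_append colsmul_id_cols_surj
    by (metis Suc_eq_plus1)
qed

subsection \<open>Sufficient decrease\<close>

lemma gksm_surrogate_gap:
  assumes iter: "gksm A y gf C K \<alpha> B x V" and "convex C" and k: "1 \<le> k"
  shows "(1/2) * (norm (A *v (x (k+1) - x k)))\<^sup>2
           + (1 / (2 * \<alpha> k)) * inner (x (k+1) - x k) (B k *v (x (k+1) - x k))
         \<le> Fbar A y gf (\<alpha> k) (B k) (x k) (x k) - Fbar A y gf (\<alpha> k) (B k) (x k) (x (k+1))"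
proof (rule quadratic_segment_minimum_gap[where G = "Fbar A y gf (\<alpha> k) (B k) (x k)"])
  fix t :: real
  assume t: "0 < t" "t \<le> 1"
  obtain \<beta> where \<beta>: "x (k+1) = colsmul (V k) \<beta>"
    using iter k unfolding gksm_def by blast
  obtain \<gamma> where \<gamma>: "x k = colsmul (V k) \<gamma>"
    using gksm_iterate_in_span[OF iter k] by blast
  have "(1 - t) *\<^sub>R x (k+1) + t *\<^sub>R x k \<in> C"
    using convexD[OF \<open>convex C\<close> gksm_iterate_mem[OF iter, of "k+1"] gksm_iterate_mem[OF iter k]]
      t by simp
  moreover have "(1 - t) *\<^sub>R x (k+1) + t *\<^sub>R x k
      = colsmul (V k) (\<lambda>j. complex_of_real (1 - t) * \<beta> j + complex_of_real t * \<gamma> j)"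
    using \<beta> \<gamma> colsmul_convex_comb by metis
  ultimately show "Fbar A y gf (\<alpha> k) (B k) (x k) (x (k+1))
      \<le> Fbar A y gf (\<alpha> k) (B k) (x k) ((1 - t) *\<^sub>R x (k+1) + t *\<^sub>R x k)"
    using iter k unfolding gksm_def by metis
qed (rule Fbar_convex_comb)

lemma gksm_sufficient_decrease:
  fixes f :: "complex ^ 'n::finite \<Rightarrow> real"
  assumes iter: "gksm A y gf C K \<alpha> B x V" and "convex C" and k: "1 \<le> k"
    and grad: "\<And>z. (f has_derivative (\<lambda>h. inner (gf z) h)) (at z)"
    and lip: "\<And>z1 z2. norm (gf z1 - gf z2) \<le> L * norm (z1 - z2)"
    and \<alpha>_pos: "0 < \<alpha> k"
    and B_lower: "\<And>z. \<eta> * (norm z)\<^sup>2 \<le> Re (cinner z (B k *v z))"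
  shows "hfun A y (x (k+1)) + f (x (k+1)) + (\<eta> / \<alpha> k - L/2) * (norm (x (k+1) - x k))\<^sup>2
         \<le> hfun A y (x k) + f (x k)"
proof -
  define d where "d = x (k+1) - x k"
  have Bd: "\<eta> * (norm d)\<^sup>2 \<le> inner d (B k *v d)"
    using B_lower[of d] by simp
  define G where "G = Fbar A y gf (\<alpha> k) (B k) (x k)"
  have "G (x k) = hfun A y (x k) + inner (gf (x k)) (x k)"
    by (simp add: G_def Fbar_def)
  moreover have "G (x (k+1)) = hfun A y (x (k+1)) + inner (gf (x k)) (x (k+1))
      + (1 / (2 * \<alpha> k)) * inner d (B k *v d)"
    by (simp add: G_def Fbar_def d_def)
  moreover have "(1 / (2 * \<alpha> k)) * inner d (B k *v d) \<le> G (x k) - G (x (k+1))"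
    using gksm_surrogate_gap[OF iter \<open>convex C\<close> k] zero_le_power2[of "norm (A *v d)"]
    unfolding G_def d_def by linarith
  moreover have "inner d (B k *v d) / \<alpha> k = 2 * ((1 / (2 * \<alpha> k)) * inner d (B k *v d))"
    by simp
  ultimately have "hfun A y (x (k+1)) + inner (gf (x k)) (x (k+1)) + inner d (B k *v d) / \<alpha> k
      \<le> hfun A y (x k) + inner (gf (x k)) (x k)"
    by linarith
  moreover have "\<eta> * (norm d)\<^sup>2 / \<alpha> k \<le> inner d (B k *v d) / \<alpha> k"
    using Bd \<alpha>_pos by (simp add: divide_right_mono)
  ultimately have "hfun A y (x (k+1)) + inner (gf (x k)) d + (\<eta> / \<alpha> k) * (norm d)\<^sup>2 \<le> hfun A y (x k)"
    unfolding d_def by (simp add: inner_diff_right)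
  moreover have "f (x (k+1)) \<le> f (x k) + inner (gf (x k)) d + L/2 * (norm d)\<^sup>2"
    using Lipschitz_gradient_upper_bound[OF grad lip, of "x k" d] by (simp add: d_def)
  ultimately show ?thesis unfolding d_def[symmetric] by (simp add: algebra_simps)
qed

lemma telescope_sufficient_decrease:
  fixes F g :: "nat \<Rightarrow> real"
  assumes "\<And>k. 1 \<le> k \<Longrightarrow> F (k+1) + c * g k \<le> F k"
  shows "c * (\<Sum>j=1..k. g j) \<le> F 1 - F (k+1)"
proof (induction k)
  case (Suc k)
  then show ?case using assms[of "Suc k"] by (simp add: algebra_simps)
qed simp

lemma Min_le_average:
  fixes g :: "nat \<Rightarrow> real"
  assumes "1 \<le> k"
  shows "Min (g ` {1..k}) \<le> (\<Sum>j=1..k. g j) / real k"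
proof -
  have "(\<Sum>j=1..k. Min (g ` {1..k})) \<le> (\<Sum>j=1..k. g j)"
    by (rule sum_mono) auto
  then show ?thesis using assms by (simp add: pos_le_divide_eq mult.commute)
qed

lemma tendsto_zero_of_bounded_partial_sums:
  fixes g :: "nat \<Rightarrow> real"
  assumes "\<And>k. 0 \<le> g k" and "\<And>k. (\<Sum>j=1..k. g j) \<le> S"
  shows "g \<longlonglongrightarrow> 0"
proof -
  have "summable (\<lambda>n. g (Suc n))"
  proof (rule summableI_nonneg_bounded)
    show "(\<Sum>j<n. g (Suc j)) \<le> S" for n
      using assms(2)[of n] by (simp add: sum.atLeast1_atMost_eq)
  qed (rule assms(1))
  from summable_LIMSEQ_zero[OF this] show ?thesis
    by (simp add: filterlim_sequentially_Suc)
qed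

theorem theorem1:
  fixes A :: "complex ^ 'n::finite ^ 'm::finite" and y :: "complex ^ 'm"
    and f :: "complex ^ 'n \<Rightarrow> real" and gf :: "complex ^ 'n \<Rightarrow> complex ^ 'n"
    and L :: real and C :: "(complex ^ 'n) set" and K :: enat
    and \<alpha> :: "nat \<Rightarrow> real" and B :: "nat \<Rightarrow> complex ^ 'n ^ 'n"
    and eta_lo eta_hi alpha_min alpha_max :: real
    and x :: "nat \<Rightarrow> complex ^ 'n" and V :: "nat \<Rightarrow> (complex ^ 'n) list"
  assumes Aty: "cadj A *v y \<noteq> 0"
    and f_grad: "\<And>z. (f has_derivative (\<lambda>h. inner (gf z) h)) (at z)"
    and f_bdd: "bdd_below (range f)"
    and L_pos: "L > 0"
    and f_lip: "\<And>z1 z2. norm (gf z1 - gf z2) \<le> L * norm (z1 - z2)"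
    and C_ne: "C \<noteq> {}" and C_closed: "closed C" and C_convex: "convex C"
    and eta: "0 < eta_lo" "eta_lo \<le> eta_hi"
    and B_herm: "\<And>k. hermitian (B k)"
    and B_bounds: "\<And>k z. eta_lo * (norm z)\<^sup>2 \<le> Re (cinner z (B k *v z))"
                  "\<And>k z. Re (cinner z (B k *v z)) \<le> eta_hi * (norm z)\<^sup>2"
    and alpha_bounds: "0 < alpha_min" "\<And>k. alpha_min \<le> \<alpha> k" "\<And>k. \<alpha> k \<le> alpha_max"
                      "alpha_max < 2 * eta_lo / (eta_lo + L)"
    and iter: "gksm A y gf C K \<alpha> B x V"
  shows "(\<forall>k\<ge>1. hfun A y (x (k+1)) + f (x (k+1)) \<le> hfun A y (x k) + f (x k))
       \<and> (\<forall>k\<ge>1. Min ((\<lambda>k'. (norm (x (k'+1) - x k'))\<^sup>2) ` {1..k})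
               \<le> (hfun A y (x 1) + f (x 1) - (INF z\<in>C. hfun A y z + f z))
                 / ((eta_lo / alpha_max - (eta_lo + L) / 2) * real k))
       \<and> (\<lambda>k. norm (x (k+1) - x k)) \<longlonglongrightarrow> 0"
proof -
  define F where "F z = hfun A y z + f z" for z
  define Fs where "Fs = (INF z\<in>C. F z)"
  define ups where "ups = eta_lo / alpha_max - (eta_lo + L) / 2"
  define g where "g k = (norm (x (k+1) - x k))\<^sup>2" for k
  have \<alpha>_pos: "0 < \<alpha> k" for k using alpha_bounds(1,2) by (meson less_le_trans)
  then have "0 < alpha_max" using alpha_bounds(3) by (meson less_le_trans)
  then have ups_pos: "0 < ups"
    using alpha_bounds(4) eta L_pos by (simp add: ups_def field_simps)
  have "ups \<le> eta_lo / \<alpha> k - L/2" for k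
    using eta \<alpha>_pos[of k] alpha_bounds(3)[of k] frac_le[of eta_lo eta_lo "\<alpha> k" alpha_max]
    by (simp add: ups_def add_divide_distrib)
  moreover have g_nonneg: "0 \<le> g k" for k by (simp add: g_def)
  ultimately have "ups * g k \<le> (eta_lo / \<alpha> k - L/2) * g k" for k
    by (simp add: mult_right_mono)
  then have decrease: "F (x (k+1)) + ups * g k \<le> F (x k)" if "1 \<le> k" for k
    using gksm_sufficient_decrease[OF iter C_convex that f_grad f_lip \<alpha>_pos B_bounds(1)]
      \<open>ups * g k \<le> (eta_lo / \<alpha> k - L/2) * g k\<close>
    unfolding F_def g_def by linarith
  obtain b where "\<And>z. b \<le> f z" using f_bdd by (auto simp: bdd_below_def)
  moreover have "0 \<le> hfun A y z" for z by (simp add: hfun_def)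
  ultimately have "bdd_below (F ` C)"
    by (intro bdd_belowI2[of _ b]) (simp add: F_def add_increasing)
  then have F_lower: "Fs \<le> F (x k)" if "1 \<le> k" for k
    unfolding Fs_def by (rule cINF_lower[OF _ gksm_iterate_mem[OF iter that]])
  have sum_bound: "(\<Sum>j=1..k. g j) \<le> (F (x 1) - Fs) / ups" for k
    using telescope_sufficient_decrease[of "\<lambda>k. F (x k)" ups g k, OF decrease]
      F_lower[of "k+1"] ups_pos
    by (simp add: pos_le_divide_eq mult.commute)
  have rate: "Min (g ` {1..k}) \<le> (F (x 1) - Fs) / (ups * real k)" if "1 \<le> k" for k
  proof -
    have "(\<Sum>j=1..k. g j) / real k \<le> (F (x 1) - Fs) / ups / real k"
      using sum_bound[of k] by (rule divide_right_mono) simp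
    then show ?thesis
      using Min_le_average[OF that, of g] by (simp add: mult.commute)
  qed
  have monotone: "F (x (k+1)) \<le> F (x k)" if "1 \<le> k" for k
    using decrease[OF that] ups_pos g_nonneg[of k] by (smt (verit) mult_nonneg_nonneg)
  have "(\<lambda>k. sqrt (g k)) \<longlonglongrightarrow> 0"
    using tendsto_real_sqrt[OF tendsto_zero_of_bounded_partial_sums[OF g_nonneg sum_bound]] by simp
  then have "(\<lambda>k. norm (x (k+1) - x k)) \<longlonglongrightarrow> 0"
    by (simp add: g_def)
  with rate monotone show ?thesis
    unfolding F_def Fs_def ups_def g_def by auto
qed

end
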